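(* Let $(X,f)$ be a dynamical system. If $(X,f)$ is $\Delta$-transitive, then for every $r\in\mathbb{N}$ and every $\mathbf{a}\in\mathbb{N}^r_*$, the system $(X^r,f^{(\mathbf{a})})$ is also $\Delta$-transitive.
   Context: A dynamical system is a pair $(X,f)$ with $X$ a compact metric space and $f:X\to X$ continuous. $\mathbb{N}=\{1,2,\dots\}$; $\mathbb{N}^r_*=\{(n_1,\dots,n_r)\in\mathbb{N}^r: n_1<n_2<\dots<n_r\}$. For a system $(Y,g)$, a point $y$ is a transitive point if its $\omega$-limit set $\omega(y,g)$ equals $Y$. For $\mathbf{a}\in\mathbb{N}^r$, $f^{(\mathbf{a})}=f^{a_1}\times\dots\times f^{a_r}:X^r\to X^r$. $(X,f)$ is $\Delta$-$\mathbf{a}$-transitive if there is $x\in X$ such that $(x,\dots,x)$ is a transitive point of $(X^r,f^{(\mathbf{a})})$; $(X,f)$ is $\Delta$-transitive if it is $\Delta$-$(1,2,\dots,n)$-transitive for every $n\in\mathbb{N}$. (The same notions apply to the system $(X^r,f^{(\mathbf{a})})$ in place of $(X,f)$.) *)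

theory Defs
  imports "HOL-Analysis.Analysis"
begin

text \<open>Points of the r-fold product Y^r are represented as extensional functions
  on the index set {..<r} (i.e. elements of PiE {..<r} (\<lambda>_. Y)), carrying the
  product topology inherited from the function type.\<close>

definition prod_space :: "nat \<Rightarrow> 'b set \<Rightarrow> (nat \<Rightarrow> 'b) set" where
  "prod_space r Y = PiE {..<r} (\<lambda>_. Y)"

definition diag :: "nat \<Rightarrow> 'b \<Rightarrow> (nat \<Rightarrow> 'b)" where
  "diag r y = (\<lambda>i\<in>{..<r}. y)"

text \<open>g^(a) = g^{a_1} x ... x g^{a_r} (indices shifted to 0..r-1).\<close>
definition prod_map :: "nat \<Rightarrow> (nat \<Rightarrow> nat) \<Rightarrow> ('b \<Rightarrow> 'b) \<Rightarrow> (nat \<Rightarrow> 'b) \<Rightarrow> (nat \<Rightarrow> 'b)" where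
  "prod_map r a g = (\<lambda>z. \<lambda>i\<in>{..<r}. (g ^^ a i) (z i))"

definition omega_limit :: "('b::topological_space \<Rightarrow> 'b) \<Rightarrow> 'b \<Rightarrow> 'b set" where
  "omega_limit g x = {y. \<forall>U. open U \<and> y \<in> U \<longrightarrow> (\<forall>N. \<exists>n\<ge>N. (g ^^ n) x \<in> U)}"

definition transitive_point :: "'b::topological_space set \<Rightarrow> ('b \<Rightarrow> 'b) \<Rightarrow> 'b \<Rightarrow> bool" where
  "transitive_point Y g y \<longleftrightarrow> omega_limit g y = Y"

definition delta_a_transitive ::
  "'b::topological_space set \<Rightarrow> ('b \<Rightarrow> 'b) \<Rightarrow> nat \<Rightarrow> (nat \<Rightarrow> nat) \<Rightarrow> bool" where
  "delta_a_transitive Y g r a \<longleftrightarrow>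
     (\<exists>y\<in>Y. transitive_point (prod_space r Y) (prod_map r a g) (diag r y))"

definition delta_transitive :: "'b::topological_space set \<Rightarrow> ('b \<Rightarrow> 'b) \<Rightarrow> bool" where
  "delta_transitive Y g \<longleftrightarrow> (\<forall>n\<ge>1. delta_a_transitive Y g n (\<lambda>i. i + 1))"

definition strict_incr_tuple :: "nat \<Rightarrow> (nat \<Rightarrow> nat) \<Rightarrow> bool" where
  "strict_incr_tuple r a \<longleftrightarrow> (\<forall>i<r. 1 \<le> a i) \<and> (\<forall>i j. i < j \<and> j < r \<longrightarrow> a i < a j)"

end

theory Submission
  imports Defs
begin

text \<open>
  Let \<open>Y = X^r\<close>, \<open>g = f^(a)\<close> and \<open>H = g \<times> g^2 \<times> \<dots> \<times> g^n\<close> on \<open>Y^n\<close>; the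
  \<open>(j,i)\<close>-coordinate of \<open>H^m(y,\<dots>,y)\<close> is \<open>f^(m(j+1)a_i)(y_i)\<close>. Put \<open>y_i = f^(k(i+1))(x)\<close>
  and \<open>m = k(r+1)\<close>: every coordinate of \<open>y\<close> and of \<open>H^m(y,\<dots>,y)\<close> is then \<open>f^(ke)(x)\<close>
  with \<open>e = (r+1) j a_i + i + 1\<close>, \<open>j = 0,\<dots>,n\<close>, and these exponents are pairwise
  distinct because \<open>e mod (r+1) = i+1\<close>. A point \<open>x\<close> that is \<open>\<Delta>\<close>-transitive for
  \<open>f \<times> f^2 \<times> \<dots> \<times> f^L\<close>, \<open>L\<close> the largest such \<open>e\<close>, therefore puts \<open>y\<close> into any given open
  subset of \<open>Y\<close> and \<open>H^m(y,\<dots>,y)\<close> into any given open subset of \<open>Y^n\<close>, for arbitrarily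
  large \<open>m\<close>. Hence for every ball \<open>B\<close> of a countable dense family in \<open>Y^n\<close> and every
  \<open>N\<close>, the points whose diagonal \<open>H\<close>-orbit meets \<open>B\<close> after time \<open>N\<close> form a dense open
  subset of the compact space \<open>Y\<close>; by the Baire category theorem these sets have a
  common point, which is the required \<open>\<Delta>\<close>-transitive point.
\<close>

lemma funpow_in_invariant:
  assumes "f ` X \<subseteq> X" "x \<in> X"
  shows "(f ^^ k) x \<in> X"
  using assms by (induction k) auto

lemma continuous_on_funpow:
  assumes "f ` X \<subseteq> X" "continuous_on X f"
  shows "continuous_on X (f ^^ k)"
proof (induction k)
  case (Suc k)
  have "(f ^^ k) ` X \<subseteq> X" using funpow_in_invariant[OF assms(1)] by auto
  then show ?case
    using Suc assms(2) by (auto intro: continuous_on_compose2)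
qed (simp add: continuous_on_id)

lemma prod_map_funpow:
  assumes "y \<in> extensional {..<r}"
  shows "(prod_map r a g ^^ m) y = (\<lambda>i\<in>{..<r}. (g ^^ (m * a i)) (y i))"
proof (induction m)
  case 0
  then show ?case using assms by (simp add: extensional_def fun_eq_iff)
next
  case (Suc m)
  then show ?case by (simp add: prod_map_def funpow_add fun_eq_iff)
qed

lemma diag_orbit_prod_map:
  assumes "y \<in> extensional {..<r}"
  shows "(prod_map n (\<lambda>j. j + 1) (prod_map r a f) ^^ m) (diag n y)
       = (\<lambda>j\<in>{..<n}. \<lambda>i\<in>{..<r}. (f ^^ (m * ((j + 1) * a i))) (y i))"
  using assms by (simp add: prod_map_funpow diag_def fun_eq_iff algebra_simps)

lemma compact_prod_space:
  fixes S :: "'b::topological_space set"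
  assumes "compact S"
  shows "compact (prod_space r S)"
proof -
  have "prod_space r S = PiE UNIV (\<lambda>i. if i < r then S else {undefined})"
    by (auto simp: prod_space_def PiE_def Pi_def extensional_def)
  then show ?thesis
    using compactin_PiE[of "\<lambda>i. euclidean" UNIV "\<lambda>i. if i < r then S else {undefined}"] assms
    by (simp add: euclidean_product_topology compactin_euclidean_iff)
qed

lemma omega_limit_subset_closed:
  assumes "closed S" "\<And>m. (g ^^ m) x \<in> S"
  shows "omega_limit g x \<subseteq> S"
proof
  fix v assume v: "v \<in> omega_limit g x"
  show "v \<in> S"
  proof (rule ccontr)
    assume "v \<notin> S"
    then obtain m where "(g ^^ m) x \<in> - S"
      using v assms(1) unfolding omega_limit_def by blast
    then show False using assms(2) by simp
  qed
qed

lemma open_fun_contains_box: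
  fixes Ob :: "('i \<Rightarrow> 'b::topological_space) set"
  assumes "open Ob" "y \<in> Ob"
  obtains V where "\<And>i. open (V i)" "\<And>i. y i \<in> V i" "\<And>z. (\<And>i. z i \<in> V i) \<Longrightarrow> z \<in> Ob"
proof -
  have "openin (product_topology (\<lambda>i. euclidean) UNIV) Ob"
    using assms by (simp add: euclidean_product_topology)
  from product_topology_open_contains_basis[OF this assms(2)] obtain V where
    "y \<in> (\<Pi>\<^sub>E i\<in>UNIV. V i)" "\<forall>i. openin euclidean (V i)" "(\<Pi>\<^sub>E i\<in>UNIV. V i) \<subseteq> Ob"
    by blast
  then show ?thesis using that[of V] by (auto simp: PiE_def Pi_def)
qed

lemma open_extensional_contains_box:
  fixes Ob :: "('i \<Rightarrow> 'b::topological_space) set"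
  assumes "open Ob" "y \<in> Ob" "y \<in> extensional I"
  obtains V where "\<And>i. open (V i)" "\<And>i. i \<in> I \<Longrightarrow> y i \<in> V i"
    "\<And>z. z \<in> extensional I \<Longrightarrow> (\<And>i. i \<in> I \<Longrightarrow> z i \<in> V i) \<Longrightarrow> z \<in> Ob"
proof -
  obtain V where V: "\<And>i. open (V i)" "\<And>i. y i \<in> V i" "\<And>z. (\<And>i. z i \<in> V i) \<Longrightarrow> z \<in> Ob"
    using open_fun_contains_box[OF assms(1,2)] by metis
  have "z \<in> Ob" if "z \<in> extensional I" "\<And>i. i \<in> I \<Longrightarrow> z i \<in> V i" for z
    using that assms(3) V(2) by (intro V(3)) (metis extensional_arb)
  with V show ?thesis using that by blast
qed

lemma open_nested_extensional_contains_box: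
  fixes U :: "('j \<Rightarrow> 'i \<Rightarrow> 'b::topological_space) set"
  assumes "open U" "w \<in> U" "w \<in> extensional J" "\<And>j. j \<in> J \<Longrightarrow> w j \<in> extensional I"
  obtains Q where "\<And>j i. open (Q j i)" "\<And>j i. j \<in> J \<Longrightarrow> i \<in> I \<Longrightarrow> w j i \<in> Q j i"
    "\<And>z. z \<in> extensional J \<Longrightarrow> (\<And>j. j \<in> J \<Longrightarrow> z j \<in> extensional I) \<Longrightarrow>
      (\<And>j i. j \<in> J \<Longrightarrow> i \<in> I \<Longrightarrow> z j i \<in> Q j i) \<Longrightarrow> z \<in> U"
proof -
  obtain W where W: "\<And>j. open (W j)" "\<And>j. j \<in> J \<Longrightarrow> w j \<in> W j"
    "\<And>z. z \<in> extensional J \<Longrightarrow> (\<And>j. j \<in> J \<Longrightarrow> z j \<in> W j) \<Longrightarrow> z \<in> U"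
    using open_extensional_contains_box[OF assms(1-3)] by metis
  have "\<forall>j. \<exists>Qj. (\<forall>i. open (Qj i)) \<and> (j \<in> J \<longrightarrow> (\<forall>i\<in>I. w j i \<in> Qj i) \<and>
          (\<forall>z\<in>extensional I. (\<forall>i\<in>I. z i \<in> Qj i) \<longrightarrow> z \<in> W j))"
  proof
    fix j
    show "\<exists>Qj. (\<forall>i. open (Qj i)) \<and> (j \<in> J \<longrightarrow> (\<forall>i\<in>I. w j i \<in> Qj i) \<and>
          (\<forall>z\<in>extensional I. (\<forall>i\<in>I. z i \<in> Qj i) \<longrightarrow> z \<in> W j))"
    proof (cases "j \<in> J")
      case True
      obtain Qj where "\<And>i. open (Qj i)" "\<And>i. i \<in> I \<Longrightarrow> w j i \<in> Qj i"
        "\<And>z. z \<in> extensional I \<Longrightarrow> (\<And>i. i \<in> I \<Longrightarrow> z i \<in> Qj i) \<Longrightarrow> z \<in> W j"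
        using open_extensional_contains_box[OF W(1) W(2) assms(4)] True by metis
      then show ?thesis by blast
    next
      case False
      then show ?thesis by (intro exI[of _ "\<lambda>_. UNIV"]) simp
    qed
  qed
  from choice[OF this] obtain Q where Q: "\<forall>j. (\<forall>i. open (Q j i)) \<and> (j \<in> J \<longrightarrow>
      (\<forall>i\<in>I. w j i \<in> Q j i) \<and> (\<forall>z\<in>extensional I. (\<forall>i\<in>I. z i \<in> Q j i) \<longrightarrow> z \<in> W j))"
    by blast
  show ?thesis
  proof (rule that)
    show "open (Q j i)" for j i
      using Q by blast
    show "w j i \<in> Q j i" if "j \<in> J" "i \<in> I" for j i
      using Q that by blast
    show "z \<in> U" if "z \<in> extensional J" "\<And>j. j \<in> J \<Longrightarrow> z j \<in> extensional I"
      "\<And>j i. j \<in> J \<Longrightarrow> i \<in> I \<Longrightarrow> z j i \<in> Q j i" for z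
      using that(1) by (rule W(3)) (use Q that(2,3) in blast)
  qed
qed

lemma mult_add_eq_imp_eq:
  fixes q i i' j j' :: nat
  assumes "i < q" "i' < q" "q * j + i = q * j' + i'"
  shows "i = i' \<and> j = j'"
proof -
  have "i = i'"
    using arg_cong[OF assms(3), of "\<lambda>s. s mod q"] assms(1,2) by simp
  then show ?thesis using assms by simp
qed

lemma delta_transitive_simultaneous_return:
  fixes X :: "'a::topological_space set"
  assumes "delta_transitive X f" "finite J" "inj_on e J" "\<And>t. t \<in> J \<Longrightarrow> e t > 0"
    and T: "\<And>t. t \<in> J \<Longrightarrow> open (T t)" "\<And>t. t \<in> J \<Longrightarrow> T t \<inter> X \<noteq> {}"
  shows "\<exists>x\<in>X. \<exists>k\<ge>N. \<forall>t\<in>J. (f ^^ (k * e t)) x \<in> T t"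
proof -
  define L where "L = Max (insert 1 (e ` J))"
  have "L \<ge> 1" and eJ: "\<And>t. t \<in> J \<Longrightarrow> e t \<le> L"
    using assms(2) by (simp_all add: L_def)
  have eL: "e t - 1 < L \<and> e t - 1 + 1 = e t" if "t \<in> J" for t
    using assms(4)[OF that] eJ[OF that] by linarith
  obtain x where x: "x \<in> X"
    and om: "omega_limit (prod_map L (\<lambda>i. i + 1) f) (diag L x) = prod_space L X"
    using assms(1) \<open>L \<ge> 1\<close>
    unfolding delta_transitive_def delta_a_transitive_def transitive_point_def by blast
  have "\<forall>t\<in>J. \<exists>y. y \<in> T t \<inter> X"
    using T(2) by blast
  then obtain c where c: "\<And>t. t \<in> J \<Longrightarrow> c t \<in> T t \<inter> X"
    by metis
  define p where "p = (\<lambda>s\<in>{..<L}. if s + 1 \<in> e ` J then c (inv_into J e (s + 1)) else x)"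
  have "p \<in> prod_space L X"
    using x c inv_into_into[of _ e J] by (auto simp: p_def prod_space_def)
  then have "p \<in> omega_limit (prod_map L (\<lambda>i. i + 1) f) (diag L x)"
    using om by simp
  moreover define Op where "Op = {z. \<forall>t\<in>J. z (e t - 1) \<in> T t}"
  have "open Op"
    unfolding Op_def by (rule product_topology_basis') (use assms(2) T(1) in auto)
  moreover have "p \<in> Op"
    using eL c assms(3) by (auto simp: Op_def p_def)
  ultimately obtain k where k: "k \<ge> N" "(prod_map L (\<lambda>i. i + 1) f ^^ k) (diag L x) \<in> Op"
    unfolding omega_limit_def by blast
  have "(prod_map L (\<lambda>i. i + 1) f ^^ k) (diag L x) (e t - 1) \<in> T t" if "t \<in> J" for t
    using k(2) that unfolding Op_def by blast
  moreover have "(prod_map L (\<lambda>i. i + 1) f ^^ k) (diag L x) (e t - 1) = (f ^^ (k * e t)) x"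
    if t: "t \<in> J" for t
  proof -
    obtain p where "e t = Suc p" "p < L"
      using eL[OF t] assms(4)[OF t] by (cases "e t") auto
    then show ?thesis by (simp add: prod_map_funpow diag_def)
  qed
  ultimately have "(f ^^ (k * e t)) x \<in> T t" if "t \<in> J" for t
    using that by metis
  with x k(1) show ?thesis by blast
qed

lemma inj_on_return_exponents:
  fixes r :: nat and a :: "nat \<Rightarrow> nat"
  assumes "\<And>i. i < r \<Longrightarrow> a i > 0"
  shows "inj_on (\<lambda>(j, i). (r + 1) * (j * a i) + (i + 1)) (UNIV \<times> {..<r})"
proof (rule inj_onI)
  fix s t
  assume "s \<in> UNIV \<times> {..<r}" "t \<in> UNIV \<times> {..<r}"
    and est: "(\<lambda>(j, i). (r + 1) * (j * a i) + (i + 1)) s = (\<lambda>(j, i). (r + 1) * (j * a i) + (i + 1)) t"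
  then obtain j i j' i' where st: "s = (j, i)" "t = (j', i')" and "i < r" "i' < r"
    by (cases s, cases t) auto
  then have "i + 1 < r + 1" "i' + 1 < r + 1"
    by auto
  moreover have "(r + 1) * (j * a i) + (i + 1) = (r + 1) * (j' * a i') + (i' + 1)"
    using est by (simp add: st)
  ultimately have "i + 1 = i' + 1 \<and> j * a i = j' * a i'"
    by (rule mult_add_eq_imp_eq)
  then show "s = t"
    using st assms[OF \<open>i < r\<close>] by auto
qed

lemma delta_transitive_return_grid:
  fixes X :: "'a::topological_space set" and r :: nat and a :: "nat \<Rightarrow> nat"
  assumes "delta_transitive X f" "\<And>i. i < r \<Longrightarrow> a i > 0"
    and "\<And>j i. j \<le> n \<Longrightarrow> i < r \<Longrightarrow> open (T j i) \<and> T j i \<inter> X \<noteq> {}"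
  shows "\<exists>x\<in>X. \<exists>k\<ge>N. \<forall>j\<le>n. \<forall>i<r. (f ^^ (k * ((r + 1) * (j * a i) + (i + 1)))) x \<in> T j i"
proof -
  define J where "J = {..n} \<times> {..<r}"
  define e where "e = (\<lambda>(j, i). (r + 1) * (j * a i) + (i + 1))"
  have "inj_on e J"
    using inj_on_return_exponents[OF assms(2)] unfolding e_def J_def
    by (rule inj_on_subset) auto
  moreover have "finite J" "\<And>t. t \<in> J \<Longrightarrow> e t > 0"
    by (auto simp: J_def e_def)
  moreover have "open (case_prod T t)" "case_prod T t \<inter> X \<noteq> {}" if "t \<in> J" for t
    using that assms(3) by (auto simp: J_def)
  ultimately obtain x k where "x \<in> X" "k \<ge> N" and ret: "\<forall>t\<in>J. (f ^^ (k * e t)) x \<in> case_prod T t"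
    using delta_transitive_simultaneous_return[OF assms(1)] by metis
  moreover have "(f ^^ (k * ((r + 1) * (j * a i) + (i + 1)))) x \<in> T j i" if "j \<le> n" "i < r" for j i
    using ret that by (auto simp: J_def e_def)
  ultimately show ?thesis by blast
qed

lemma continuous_on_restrict_coordinatewise:
  assumes "\<And>i. i \<in> I \<Longrightarrow> continuous_on S (\<lambda>x. g x i)"
  shows "continuous_on S (\<lambda>x. \<lambda>i\<in>I. g x i)"
proof (rule continuous_on_coordinatewise_then_product)
  show "continuous_on S (\<lambda>x. restrict (g x) I i)" for i
    by (cases "i \<in> I") (simp_all add: assms)
qed

lemma continuous_on_diag_orbit_prod_map:
  fixes X :: "'a::topological_space set"
  assumes "f ` X \<subseteq> X" "continuous_on X f"
  shows "continuous_on (prod_space r X)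
           (\<lambda>y. (prod_map n (\<lambda>j. j + 1) (prod_map r a f) ^^ m) (diag n y))"
proof (rule continuous_on_eq)
  have "continuous_on (prod_space r X) ((f ^^ p) \<circ> (\<lambda>y. y i))" if "i < r" for i p
  proof (rule continuous_on_compose)
    show "continuous_on (prod_space r X) (\<lambda>y. y i)"
      by (rule continuous_on_subset[OF continuous_on_product_coordinates subset_UNIV])
    show "continuous_on ((\<lambda>y. y i) ` prod_space r X) (f ^^ p)"
      by (rule continuous_on_subset[OF continuous_on_funpow[OF assms]])
        (use that in \<open>auto simp: prod_space_def\<close>)
  qed
  then show "continuous_on (prod_space r X)
      (\<lambda>y. \<lambda>j\<in>{..<n}. \<lambda>i\<in>{..<r}. (f ^^ (m * ((j + 1) * a i))) (y i))"
    by (intro continuous_on_restrict_coordinatewise) (simp add: o_def)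
next
  fix y assume "y \<in> prod_space r X"
  then have "y \<in> extensional {..<r}"
    by (simp add: prod_space_def PiE_def)
  then show "(\<lambda>j\<in>{..<n}. \<lambda>i\<in>{..<r}. (f ^^ (m * ((j + 1) * a i))) (y i))
      = (prod_map n (\<lambda>j. j + 1) (prod_map r a f) ^^ m) (diag n y)"
    by (rule diag_orbit_prod_map[symmetric])
qed

lemma diag_orbit_prod_map_in:
  assumes "f ` X \<subseteq> X" "y \<in> prod_space r X"
  shows "(prod_map n (\<lambda>j. j + 1) (prod_map r a f) ^^ m) (diag n y) \<in> prod_space n (prod_space r X)"
proof -
  have "y \<in> extensional {..<r}"
    using assms(2) by (simp add: prod_space_def PiE_def)
  then show ?thesis
    unfolding diag_orbit_prod_map[OF \<open>y \<in> extensional {..<r}\<close>]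
    using assms funpow_in_invariant[OF assms(1)] by (auto simp: prod_space_def PiE_iff)
qed

lemma diag_orbit_prod_map_staggered:
  "(prod_map n (\<lambda>j. j + 1) (prod_map r a f) ^^ (k * q)) (diag n (\<lambda>i\<in>{..<r}. (f ^^ (k * (i + 1))) x))
     = (\<lambda>j\<in>{..<n}. \<lambda>i\<in>{..<r}. (f ^^ (k * (q * ((j + 1) * a i) + (i + 1)))) x)"
proof -
  have ext: "(\<lambda>i\<in>{..<r}. (f ^^ (k * (i + 1))) x) \<in> extensional {..<r}"
    by simp
  show ?thesis
    unfolding diag_orbit_prod_map[OF ext]
    by (intro restrict_ext) (simp only: restrict_apply' add_mult_distrib2 mult.assoc funpow_add o_apply)
qed

lemma prod_map_diag_orbit_hits:
  fixes X :: "'a::topological_space set"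
  assumes "f ` X \<subseteq> X" "delta_transitive X f" "\<And>i. i < r \<Longrightarrow> a i > 0"
    and "open Ob" "Ob \<inter> prod_space r X \<noteq> {}" "open U" "U \<inter> prod_space n (prod_space r X) \<noteq> {}"
  shows "\<exists>y\<in>prod_space r X \<inter> Ob. \<exists>m\<ge>N.
           (prod_map n (\<lambda>j. j + 1) (prod_map r a f) ^^ m) (diag n y) \<in> U"
proof -
  obtain y0 where y0: "y0 \<in> Ob" "y0 \<in> prod_space r X"
    using assms(5) by blast
  obtain w where w: "w \<in> U" "w \<in> prod_space n (prod_space r X)"
    using assms(7) by blast
  have ext: "y0 \<in> extensional {..<r}" "w \<in> extensional {..<n}"
    "\<And>j. j \<in> {..<n} \<Longrightarrow> w j \<in> extensional {..<r}"
    using y0(2) w(2) by (auto simp: prod_space_def PiE_def Pi_def)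
  obtain V where V: "\<And>i. open (V i)" "\<And>i. i \<in> {..<r} \<Longrightarrow> y0 i \<in> V i"
    "\<And>z. z \<in> extensional {..<r} \<Longrightarrow> (\<And>i. i \<in> {..<r} \<Longrightarrow> z i \<in> V i) \<Longrightarrow> z \<in> Ob"
    by (elim open_extensional_contains_box[OF assms(4) y0(1) ext(1)])
  obtain Q where Q: "\<And>j i. open (Q j i)"
    "\<And>j i. j \<in> {..<n} \<Longrightarrow> i \<in> {..<r} \<Longrightarrow> w j i \<in> Q j i"
    "\<And>z. z \<in> extensional {..<n} \<Longrightarrow> (\<And>j. j \<in> {..<n} \<Longrightarrow> z j \<in> extensional {..<r}) \<Longrightarrow>
      (\<And>j i. j \<in> {..<n} \<Longrightarrow> i \<in> {..<r} \<Longrightarrow> z j i \<in> Q j i) \<Longrightarrow> z \<in> U"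
    using open_nested_extensional_contains_box[OF assms(6) w(1) ext(2,3)] by blast
  define q where "q = r + 1"
  \<comment> \<open>Target \<open>T 0 i\<close> is for coordinate \<open>i\<close> of \<open>y\<close>, target \<open>T (j+1) i\<close> for coordinate
    \<open>(j,i)\<close> of the orbit point.\<close>
  define T where "T j i = (if j = 0 then V i else Q (j - 1) i)" for j i
  have targets: "open (T j i) \<and> T j i \<inter> X \<noteq> {}" if "j \<le> n" "i < r" for j i
  proof (cases "j = 0")
    case True
    then have "y0 i \<in> T j i \<inter> X"
      using that V(2) y0(2) by (auto simp: T_def prod_space_def)
    then show ?thesis using V(1) True by (auto simp: T_def)
  next
    case False
    then have "w (j - 1) i \<in> T j i \<inter> X"
      using that Q(2) w(2) by (auto simp: T_def prod_space_def)
    then show ?thesis using Q(1) False by (auto simp: T_def)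
  qed
  have "\<exists>x\<in>X. \<exists>k\<ge>N. \<forall>j\<le>n. \<forall>i<r. (f ^^ (k * (q * (j * a i) + (i + 1)))) x \<in> T j i"
    unfolding q_def by (rule delta_transitive_return_grid[OF assms(2,3) targets])
  then obtain x k where x: "x \<in> X" and "k \<ge> N"
    and ret: "\<forall>j\<le>n. \<forall>i<r. (f ^^ (k * (q * (j * a i) + (i + 1)))) x \<in> T j i"
    by blast
  define y where "y = (\<lambda>i\<in>{..<r}. (f ^^ (k * (i + 1))) x)"
  have "y \<in> prod_space r X"
    using funpow_in_invariant[OF assms(1) x] by (auto simp: y_def prod_space_def)
  moreover have "y \<in> Ob"
  proof (rule V(3))
    show "y i \<in> V i" if "i \<in> {..<r}" for i
      using ret[rule_format, of 0 i] that by (simp add: y_def T_def)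
  qed (simp add: y_def)
  moreover have "(prod_map n (\<lambda>j. j + 1) (prod_map r a f) ^^ (k * q)) (diag n y) \<in> U"
    unfolding y_def diag_orbit_prod_map_staggered
  proof (rule Q(3))
    show "(\<lambda>j\<in>{..<n}. \<lambda>i\<in>{..<r}. (f ^^ (k * (q * ((j + 1) * a i) + (i + 1)))) x) j i \<in> Q j i"
      if "j \<in> {..<n}" "i \<in> {..<r}" for j i
      using ret[rule_format, of "j + 1" i] that by (simp add: T_def)
  qed simp_all
  moreover have "k * q \<ge> N"
    using \<open>k \<ge> N\<close> by (simp add: q_def)
  ultimately show ?thesis by blast
qed

lemma compact_Baire_Inter_nonempty:
  fixes Y :: "'b::metric_space set"
  assumes "compact Y" "Y \<noteq> {}" "countable \<G>"
    and "\<And>T. T \<in> \<G> \<Longrightarrow> openin (top_of_set Y) T \<and> top_of_set Y closure_of T = Y"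
  shows "Y \<inter> \<Inter>\<G> \<noteq> {}"
proof -
  have "locally_compact_space (top_of_set Y) \<and> regular_space (top_of_set Y)"
    by (metis assms(1) compact_imp_locally_compact_space compact_space_subtopology
        compactin_euclidean_iff metrizable_imp_regular_space metrizable_space_euclidean
        metrizable_space_subtopology)
  then have "top_of_set Y closure_of \<Inter>\<G> = topspace (top_of_set Y)"
    by (intro Baire_category) (use assms(3,4) in auto)
  then show ?thesis
    using assms(2) by (metis closure_of_empty closure_of_restrict topspace_euclidean_subtopology)
qed

lemma visiting_set_open_dense:
  fixes Phi :: "nat \<Rightarrow> 'b::topological_space \<Rightarrow> 'c::topological_space" and N :: nat
  assumes "\<And>m. continuous_on Y (Phi m)"
    and hits: "\<And>Ob U N. open Ob \<Longrightarrow> Ob \<inter> Y \<noteq> {} \<Longrightarrow> open U \<Longrightarrow> U \<inter> Z \<noteq> {} \<Longrightarrow>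
                 \<exists>y\<in>Y \<inter> Ob. \<exists>m\<ge>N. Phi m y \<in> U"
    and "open W" "W \<inter> Z \<noteq> {}"
  shows "openin (top_of_set Y) {y\<in>Y. \<exists>m\<ge>N. Phi m y \<in> W}
    \<and> top_of_set Y closure_of {y\<in>Y. \<exists>m\<ge>N. Phi m y \<in> W} = Y"
proof
  have "{y\<in>Y. \<exists>m\<ge>N. Phi m y \<in> W} = (\<Union>m\<in>{N..}. Y \<inter> Phi m -` W)"
    by auto
  moreover have "openin (top_of_set Y) (\<Union>m\<in>{N..}. Y \<inter> Phi m -` W)"
    using assms(1,3) continuous_openin_preimage_eq by (intro openin_Union) blast
  ultimately show "openin (top_of_set Y) {y\<in>Y. \<exists>m\<ge>N. Phi m y \<in> W}"
    by simp
  have "{y\<in>Y. \<exists>m\<ge>N. Phi m y \<in> W} \<inter> V \<noteq> {}" if "openin (top_of_set Y) V" "V \<noteq> {}" for V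
  proof -
    obtain Ob where Ob: "open Ob" "V = Y \<inter> Ob"
      using \<open>openin (top_of_set Y) V\<close> by (auto simp: openin_open)
    with \<open>V \<noteq> {}\<close> have "Ob \<inter> Y \<noteq> {}"
      by blast
    then obtain y m where "y \<in> Y \<inter> Ob" "m \<ge> N" "Phi m y \<in> W"
      using hits[OF \<open>open Ob\<close> _ \<open>open W\<close> \<open>W \<inter> Z \<noteq> {}\<close>, where N = N] by blast
    then have "y \<in> {y\<in>Y. \<exists>m\<ge>N. Phi m y \<in> W} \<inter> V"
      using Ob(2) by auto
    then show ?thesis by blast
  qed
  then have "top_of_set Y closure_of {y\<in>Y. \<exists>m\<ge>N. Phi m y \<in> W} = topspace (top_of_set Y)"
    unfolding dense_intersects_open by blast
  then show "top_of_set Y closure_of {y\<in>Y. \<exists>m\<ge>N. Phi m y \<in> W} = Y"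
    by simp
qed

lemma Baire_generic_recurrent_point:
  fixes Y :: "'b::metric_space set" and Z :: "'c::metric_space set"
    and Phi :: "nat \<Rightarrow> 'b \<Rightarrow> 'c"
  assumes "compact Y" "Y \<noteq> {}" "compact Z" "\<And>m. continuous_on Y (Phi m)"
    and hits: "\<And>Ob U N. open Ob \<Longrightarrow> Ob \<inter> Y \<noteq> {} \<Longrightarrow> open U \<Longrightarrow> U \<inter> Z \<noteq> {} \<Longrightarrow>
                 \<exists>y\<in>Y \<inter> Ob. \<exists>m\<ge>N. Phi m y \<in> U"
  shows "\<exists>y\<in>Y. \<forall>v\<in>Z. \<forall>U. open U \<and> v \<in> U \<longrightarrow> (\<forall>N. \<exists>m\<ge>N. Phi m y \<in> U)"
proof -
  define \<rho> where "\<rho> k = inverse (real (Suc k))" for k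
  have \<rho>_pos: "\<rho> k > 0" for k
    by (simp add: \<rho>_def)
  have "\<exists>F. F \<subseteq> Z \<and> finite F \<and> Z \<subseteq> (\<Union>d\<in>F. ball d (\<rho> k))" for k
    using compactE_image[OF assms(3), of Z "\<lambda>d. ball d (\<rho> k)"] by (force simp: \<rho>_def)
  then obtain F where F: "\<And>k. F k \<subseteq> Z" "\<And>k. finite (F k)" "\<And>k. Z \<subseteq> (\<Union>d\<in>F k. ball d (\<rho> k))"
    by metis
  define R where "R k d N = {y\<in>Y. \<exists>m\<ge>N. Phi m y \<in> ball d (\<rho> k)}" for k d N
  define \<G> where "\<G> = (\<lambda>(k, d, N). R k d N) ` (SIGMA k:UNIV. F k \<times> UNIV)"
  have "countable \<G>"
    unfolding \<G>_def using F(2) by (intro countable_image countable_SIGMA) (auto intro: countable_finite)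
  moreover have R_open_dense: "openin (top_of_set Y) (R k d N) \<and> top_of_set Y closure_of (R k d N) = Y"
    if "d \<in> Z" for k d N
  proof -
    have "ball d (\<rho> k) \<inter> Z \<noteq> {}"
      using \<open>d \<in> Z\<close> \<rho>_pos[of k] by (metis IntI centre_in_ball empty_iff)
    from visiting_set_open_dense[OF assms(4) hits open_ball this]
    show ?thesis
      unfolding R_def .
  qed
  ultimately have "Y \<inter> \<Inter>\<G> \<noteq> {}"
  proof (intro compact_Baire_Inter_nonempty[OF assms(1,2)])
    fix T assume "T \<in> \<G>"
    then obtain k d N where "T = R k d N" "d \<in> F k"
      by (auto simp: \<G>_def)
    then show "openin (top_of_set Y) T \<and> top_of_set Y closure_of T = Y"
      using R_open_dense F(1) by blast
  qed
  then obtain y where y: "y \<in> Y" "\<And>T. T \<in> \<G> \<Longrightarrow> y \<in> T"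
    by blast
  have "\<exists>m\<ge>N. Phi m y \<in> U" if "v \<in> Z" "open U" "v \<in> U" for v U N
  proof -
    obtain \<epsilon> where "\<epsilon> > 0" "ball v \<epsilon> \<subseteq> U"
      using open_contains_ball \<open>open U\<close> \<open>v \<in> U\<close> by blast
    then obtain k where k: "\<rho> k < \<epsilon> / 2"
      using reals_Archimedean[of "\<epsilon> / 2"] by (auto simp: \<rho>_def)
    obtain d where d: "d \<in> F k" "v \<in> ball d (\<rho> k)"
      using F(3) \<open>v \<in> Z\<close> by blast
    then have "R k d N \<in> \<G>"
      unfolding \<G>_def by (intro image_eqI[where x = "(k, d, N)"]) auto
    then have "y \<in> R k d N"
      by (rule y(2))
    then obtain m where "m \<ge> N" "dist d (Phi m y) < \<rho> k"
      by (auto simp: R_def)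
    then have "Phi m y \<in> ball v \<epsilon>"
      using d(2) k dist_triangle[of v "Phi m y" d] by (simp add: dist_commute)
    with \<open>m \<ge> N\<close> \<open>ball v \<epsilon> \<subseteq> U\<close> show ?thesis by blast
  qed
  with y(1) show ?thesis by blast
qed

lemma delta_a_transitive_prod_map:
  fixes X :: "'a::metric_space set"
  assumes "compact X" "f ` X \<subseteq> X" "continuous_on X f" "delta_transitive X f"
    and "\<And>i. i < r \<Longrightarrow> a i > 0"
  shows "delta_a_transitive (prod_space r X) (prod_map r a f) n (\<lambda>j. j + 1)"
proof -
  define Y where "Y = prod_space r X"
  define H where "H = prod_map n (\<lambda>j. j + 1) (prod_map r a f)"
  obtain x where "x \<in> X"
    using assms(4) unfolding delta_transitive_def delta_a_transitive_def by auto
  then have "diag r x \<in> Y"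
    by (simp add: Y_def prod_space_def diag_def)
  have "compact Y" "compact (prod_space n Y)"
    unfolding Y_def by (intro compact_prod_space assms(1))+
  have "\<exists>y\<in>Y. \<forall>v\<in>prod_space n Y. \<forall>U. open U \<and> v \<in> U \<longrightarrow> (\<forall>N. \<exists>m\<ge>N. (H ^^ m) (diag n y) \<in> U)"
  proof (rule Baire_generic_recurrent_point[where Phi = "\<lambda>m y. (H ^^ m) (diag n y)"])
    show "Y \<noteq> {}"
      using \<open>diag r x \<in> Y\<close> by blast
    show "continuous_on Y (\<lambda>y. (H ^^ m) (diag n y))" for m
      unfolding Y_def H_def by (rule continuous_on_diag_orbit_prod_map[OF assms(2,3)])
    show "\<exists>y\<in>Y \<inter> Ob. \<exists>m\<ge>N. (H ^^ m) (diag n y) \<in> U"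
      if "open Ob" "Ob \<inter> Y \<noteq> {}" "open U" "U \<inter> prod_space n Y \<noteq> {}" for Ob U N
      using prod_map_diag_orbit_hits[OF assms(2,4,5) that[unfolded Y_def]] unfolding Y_def H_def .
  qed fact+
  then obtain y where "y \<in> Y"
    and recurrent: "\<forall>v\<in>prod_space n Y. \<forall>U. open U \<and> v \<in> U \<longrightarrow> (\<forall>N. \<exists>m\<ge>N. (H ^^ m) (diag n y) \<in> U)"
    by blast
  have "omega_limit H (diag n y) = prod_space n Y"
  proof
    show "omega_limit H (diag n y) \<subseteq> prod_space n Y"
      using \<open>compact (prod_space n Y)\<close> diag_orbit_prod_map_in[OF assms(2) \<open>y \<in> Y\<close>[unfolded Y_def]]
      unfolding Y_def H_def by (intro omega_limit_subset_closed compact_imp_closed)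
    show "prod_space n Y \<subseteq> omega_limit H (diag n y)"
      using recurrent unfolding omega_limit_def by blast
  qed
  with \<open>y \<in> Y\<close> show ?thesis
    unfolding delta_a_transitive_def transitive_point_def Y_def H_def by blast
qed

theorem proposition5p3:
  fixes X :: "'a::metric_space set" and f :: "'a \<Rightarrow> 'a"
  assumes "compact X" and "f ` X \<subseteq> X" and "continuous_on X f"
    and "delta_transitive X f"
  shows "\<forall>r\<ge>1. \<forall>a. strict_incr_tuple r a \<longrightarrow>
           delta_transitive (prod_space r X) (prod_map r a f)"
proof (intro allI impI)
  fix r :: nat and a
  assume "strict_incr_tuple r a"
  then have "\<And>i. i < r \<Longrightarrow> a i > 0"
    by (auto simp: strict_incr_tuple_def)
  then show "delta_transitive (prod_space r X) (prod_map r a f)"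
    unfolding delta_transitive_def using delta_a_transitive_prod_map[OF assms] by blast
qed

end
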